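(* Let $D$ be a $3$-dicritical semi-complete digraph. Then every arc $a$ of $D$ either belongs to a digon or is contained in an induced directed triangle of $D$.
   Context: Digraphs have no loops or parallel arcs; a digon is a pair of arcs $uv,vu$. A $2$-dicolouring is a map to $\{1,2\}$ whose colour classes induce acyclic subdigraphs. $D$ is $3$-dicritical if $D$ has no $2$-dicolouring but every proper subdigraph has one. $D$ is semi-complete if every two distinct vertices are joined by at least one arc. An induced directed triangle is a set of three vertices $x,y,z$ such that the subdigraph induced by them has exactly the arcs $xy,yz,zx$. *)

theory Defs
  imports Main
begin

definition digraph :: "'a set \<Rightarrow> ('a \<times> 'a) set \<Rightarrow> bool" where
  "digraph V A \<longleftrightarrow> finite V \<and> A \<subseteq> V \<times> V \<and> (\<forall>v. (v, v) \<notin> A)"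

definition dicolouring :: "nat \<Rightarrow> 'a set \<Rightarrow> ('a \<times> 'a) set \<Rightarrow> ('a \<Rightarrow> nat) \<Rightarrow> bool" where
  "dicolouring k V A c \<longleftrightarrow>
     (\<forall>v\<in>V. c v \<in> {1..k}) \<and>
     (\<forall>i\<in>{1..k}. acyclic (A \<inter> ({v\<in>V. c v = i} \<times> {v\<in>V. c v = i})))"

definition dicolourable :: "nat \<Rightarrow> 'a set \<Rightarrow> ('a \<times> 'a) set \<Rightarrow> bool" where
  "dicolourable k V A \<longleftrightarrow> (\<exists>c. dicolouring k V A c)"

definition subdigraph :: "'a set \<Rightarrow> ('a \<times> 'a) set \<Rightarrow> 'a set \<Rightarrow> ('a \<times> 'a) set \<Rightarrow> bool" where
  "subdigraph V' A' V A \<longleftrightarrow> V' \<subseteq> V \<and> A' \<subseteq> A \<and> A' \<subseteq> V' \<times> V'"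

definition dicritical :: "nat \<Rightarrow> 'a set \<Rightarrow> ('a \<times> 'a) set \<Rightarrow> bool" where
  "dicritical k V A \<longleftrightarrow> digraph V A \<and> \<not> dicolourable (k - 1) V A \<and>
     (\<forall>V' A'. subdigraph V' A' V A \<and> (V', A') \<noteq> (V, A) \<longrightarrow> dicolourable (k - 1) V' A')"

definition semi_complete :: "'a set \<Rightarrow> ('a \<times> 'a) set \<Rightarrow> bool" where
  "semi_complete V A \<longleftrightarrow> (\<forall>u\<in>V. \<forall>v\<in>V. u \<noteq> v \<longrightarrow> (u, v) \<in> A \<or> (v, u) \<in> A)"

definition in_digon :: "('a \<times> 'a) set \<Rightarrow> 'a \<times> 'a \<Rightarrow> bool" where
  "in_digon A a \<longleftrightarrow> a \<in> A \<and> (snd a, fst a) \<in> A"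

definition induced_directed_triangle :: "'a set \<Rightarrow> ('a \<times> 'a) set \<Rightarrow> 'a \<Rightarrow> 'a \<Rightarrow> 'a \<Rightarrow> bool" where
  "induced_directed_triangle V A x y z \<longleftrightarrow> x \<in> V \<and> y \<in> V \<and> z \<in> V \<and>
     x \<noteq> y \<and> y \<noteq> z \<and> z \<noteq> x \<and>
     A \<inter> ({x, y, z} \<times> {x, y, z}) = {(x, y), (y, z), (z, x)}"

end

theory Submission
  imports Defs
begin

text \<open>Let \<open>uv\<close> be an arc not in a digon. By criticality \<open>D - uv\<close> has a 2-dicolouring, and the
  colour class \<open>S\<close> of \<open>u\<close> and \<open>v\<close> then contains a directed \<open>v\<close>-\<open>u\<close> path avoiding \<open>uv\<close>.
  Inside \<open>S\<close> the digraph \<open>D - uv\<close> is acyclic, and every vertex other than \<open>u\<close> is adjacent to \<open>v\<close>;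
  walking along the path, every vertex before \<open>u\<close> must therefore be an out-neighbour of \<open>v\<close>,
  so the path can be shortcut to \<open>v \<rightarrow> w \<rightarrow> u\<close>. Acyclicity of \<open>S\<close> forbids the arcs \<open>wv\<close> and
  \<open>uw\<close>, hence \<open>u, v, w\<close> is an induced directed triangle.\<close>

lemma acyclic_asym:
  assumes "acyclic r" and "(x, y) \<in> r"
  shows "(y, x) \<notin> r"
  using assms unfolding acyclic_def by (meson r_into_trancl trancl_into_trancl)

lemma acyclic_trancl_two_step:
  assumes acy: "acyclic B"
    and path: "(v, u) \<in> B\<^sup>+" and no_arc: "(v, u) \<notin> B"
    and adjacent: "\<And>x. (v, x) \<in> B\<^sup>+ \<Longrightarrow> x \<noteq> u \<Longrightarrow> (v, x) \<in> B \<or> (x, v) \<in> B"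
  shows "\<exists>w. (v, w) \<in> B \<and> (w, u) \<in> B"
proof (rule ccontr)
  assume no_two_step: "\<not> ?thesis"
  have "(v, y) \<in> B" if "(v, y) \<in> B\<^sup>+" for y
    using that
  proof (induction rule: trancl_induct)
    case (step y z)
    have "(v, z) \<in> B\<^sup>+" using step by auto
    moreover have "z \<noteq> u" using no_two_step step by auto
    moreover have "(z, v) \<notin> B"
    proof
      assume "(z, v) \<in> B"
      then have "(v, v) \<in> B\<^sup>+" using step by (meson r_into_trancl trancl_trans)
      then show False using acy unfolding acyclic_def by blast
    qed
    ultimately show ?case using adjacent by blast
  qed
  with path no_arc show False by blast
qed

lemma dicritical_arc_deletion_dicolourable:
  assumes "dicritical k V A" and "a \<in> A"
  shows "dicolourable (k - 1) V (A - {a})"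
proof -
  have "subdigraph V (A - {a}) V A" "(V, A - {a}) \<noteq> (V, A)"
    using assms unfolding dicritical_def digraph_def subdigraph_def by auto
  then show ?thesis using assms(1) unfolding dicritical_def by blast
qed

lemma dicritical_arc_colour_class:
  assumes crit: "dicritical k V A" and uv: "(u, v) \<in> A"
  obtains S where "S \<subseteq> V" "u \<in> S" "v \<in> S"
    "acyclic ((A - {(u, v)}) \<inter> (S \<times> S))"
    "(v, u) \<in> ((A - {(u, v)}) \<inter> (S \<times> S))\<^sup>+"
proof -
  obtain c where c: "dicolouring (k - 1) V (A - {(u, v)}) c"
    using dicritical_arc_deletion_dicolourable[OF crit uv] unfolding dicolourable_def by blast
  have "\<not> dicolouring (k - 1) V A c"
    using crit unfolding dicritical_def dicolourable_def by blast
  then obtain i where i: "i \<in> {1..k - 1}"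
    and cyclic: "\<not> acyclic (A \<inter> ({x \<in> V. c x = i} \<times> {x \<in> V. c x = i}))"
    using c unfolding dicolouring_def by blast
  define S where "S = {x \<in> V. c x = i}"
  define B where "B = (A - {(u, v)}) \<inter> (S \<times> S)"
  have acy: "acyclic B"
    using c i unfolding dicolouring_def B_def S_def by (simp add: Int_Diff Diff_Int_distrib2)
  have ends: "u \<in> S \<and> v \<in> S"
  proof (rule ccontr)
    assume "\<not> (u \<in> S \<and> v \<in> S)"
    then have "A \<inter> (S \<times> S) = B" unfolding B_def by auto
    with acy cyclic show False unfolding S_def by simp
  qed
  then have "A \<inter> (S \<times> S) = insert (u, v) B" unfolding B_def using uv by auto
  then have "(v, u) \<in> B\<^sup>*" using cyclic acy unfolding S_def[symmetric] by simp
  moreover have "u \<noteq> v" using crit uv unfolding dicritical_def digraph_def by auto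
  ultimately have "(v, u) \<in> B\<^sup>+" by (auto simp: rtrancl_eq_or_trancl)
  moreover have "S \<subseteq> V" unfolding S_def by blast
  ultimately show thesis using that acy ends unfolding B_def by blast
qed

theorem lemma14:
  fixes V :: "'a set" and A :: "('a \<times> 'a) set"
  assumes "dicritical 3 V A"
    and "semi_complete V A"
    and "a \<in> A"
  shows "in_digon A a \<or>
         (\<exists>x y z. induced_directed_triangle V A x y z \<and> a \<in> {(x, y), (y, z), (z, x)})"
proof (cases "in_digon A a")
  case False
  obtain u v where a: "a = (u, v)" by (cases a)
  have uv: "(u, v) \<in> A" and vu: "(v, u) \<notin> A"
    using assms(3) False unfolding a in_digon_def by auto
  have loopless: "\<And>x. (x, x) \<notin> A" using assms(1) unfolding dicritical_def digraph_def by auto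
  obtain S where S: "S \<subseteq> V" "u \<in> S" "v \<in> S"
    and colour_class: "acyclic ((A - {(u, v)}) \<inter> (S \<times> S))"
      "(v, u) \<in> ((A - {(u, v)}) \<inter> (S \<times> S))\<^sup>+"
    using dicritical_arc_colour_class[OF assms(1) uv] by blast
  define B where "B = (A - {(u, v)}) \<inter> (S \<times> S)"
  have acy: "acyclic B" and path: "(v, u) \<in> B\<^sup>+" using colour_class unfolding B_def .
  have "(v, x) \<in> B \<or> (x, v) \<in> B" if "(v, x) \<in> B\<^sup>+" "x \<noteq> u" for x
  proof -
    have "x \<in> S" using that(1) by (induction rule: trancl_induct) (auto simp: B_def)
    moreover have "x \<noteq> v" using that(1) acy unfolding acyclic_def by blast
    ultimately show ?thesis using assms(2) S that(2) unfolding semi_complete_def B_def by blast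
  qed
  moreover have "(v, u) \<notin> B" using vu unfolding B_def by blast
  ultimately obtain w where vw: "(v, w) \<in> B" and wu: "(w, u) \<in> B"
    using acyclic_trancl_two_step[OF acy path] by blast
  have w: "w \<in> S" "w \<noteq> u" "w \<noteq> v" and vwA: "(v, w) \<in> A" and wuA: "(w, u) \<in> A"
    using vw wu loopless unfolding B_def by auto
  have "(w, v) \<notin> B" "(u, w) \<notin> B" using acyclic_asym[OF acy] vw wu by blast+
  then have "(w, v) \<notin> A" "(u, w) \<notin> A" using S w unfolding B_def by auto
  then have "induced_directed_triangle V A u v w"
    using S w uv vu vwA wuA loopless unfolding induced_directed_triangle_def by auto
  then show ?thesis unfolding a by blast
qed simp

end
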